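(* The Lagrange spectrum of $\mathbb{Q}((1/T))$ is $\mathbb{L}=\{1,2,3,\dots\}\cup\{\infty\}$.
   Context: $\mathbb{Q}((1/T))=\{\sum_{i=-\infty}^{m}a_iT^i: m\in\mathbb{Z},\ a_i\in\mathbb{Q}\}$ is the field of formal Laurent series in $1/T$ with rational coefficients. For nonzero $\alpha=\sum_{i\le m}a_iT^i$ with $a_m\neq0$, set $\deg\alpha=m$, and $\deg 0=-\infty$; on $\mathbb{Q}(T)$ this agrees with $\deg(P/Q)=\deg P-\deg Q$. For $\alpha\in\mathbb{Q}((1/T))$ not in $\mathbb{Q}(T)$, the Lagrange constant $l(\alpha)\in\mathbb{Z}\cup\{\infty\}$ is the supremum of the integers $k$ such that $\deg(\alpha-p/q)\le-2\deg q-k$ holds for infinitely many pairs $p,q\in\mathbb{Q}[T]$, $q\ne0$. The Lagrange spectrum is $\mathbb{L}=\{l(\alpha):\alpha\in\mathbb{Q}((1/T))\setminus\mathbb{Q}(T)\}$. *)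

theory Defs
  imports "HOL-Computational_Algebra.Polynomial" "HOL-Computational_Algebra.Formal_Laurent_Series"
    "HOL-Library.Extended_Real"
begin

text \<open>Q((1/T)) is modelled as rat fls (Laurent series in X with finite principal part),
  with X = 1/T, i.e. T = fls_X_inv.  Then sum_{i<=m} a_i T^i = sum_{i<=m} a_i X^(-i).\<close>

type_synonym laurentT = "rat fls"

definition polyT :: "rat poly \<Rightarrow> laurentT" where
  "polyT p = poly (map_poly fls_const p) fls_X_inv"

text \<open>deg alpha = largest exponent of T with nonzero coefficient = - subdegree in X.
  The predicate deg alpha <= n, with deg 0 = -infinity.\<close>
definition degT_le :: "laurentT \<Rightarrow> int \<Rightarrow> bool" where
  "degT_le \<alpha> n \<longleftrightarrow> \<alpha> = 0 \<or> - fls_subdegree \<alpha> \<le> n"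

definition ratfunT :: "laurentT set" where
  "ratfunT = {polyT p / polyT q | p q. q \<noteq> 0}"

definition good_approx :: "laurentT \<Rightarrow> int \<Rightarrow> laurentT set" where
  "good_approx \<alpha> k = {r. \<exists>p q. q \<noteq> 0 \<and> r = polyT p / polyT q \<and>
      degT_le (\<alpha> - r) (- 2 * int (degree q) - k)}"

definition lagrange_const :: "laurentT \<Rightarrow> ereal" where
  "lagrange_const \<alpha> = Sup {ereal (of_int k) | k. infinite (good_approx \<alpha> k)}"

definition lagrange_spectrum :: "ereal set" where
  "lagrange_spectrum = {lagrange_const \<alpha> | \<alpha>. \<alpha> \<notin> ratfunT}"

end

theory Submission
  imports Defs
begin

text \<open>
  Dirichlet's argument gives l(alpha) >= 1 for every irrational alpha: the coefficients of
  T^-1, ..., T^-N in q alpha are N linear forms in the N + 1 coefficients of a polynomial q of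
  degree <= N, so some nonzero q kills them all.

  The value m >= 1 is attained by the root alpha_m = [T^m; T^m, T^m, ...] of x^2 - T^m x - 1.
  Let beta_m be the other root. For p/q \<noteq> alpha_m close to alpha_m we have deg (beta_m - p/q) = m,
  and q^2 (alpha_m - p/q) (beta_m - p/q) = p^2 - T^m p q - q^2 is a nonzero polynomial, so
  deg (alpha_m - p/q) = -2 deg q - m + deg (p^2 - T^m p q - q^2) >= -2 deg q - m,
  with equality for the convergents, whose norm is +-1.

  The value infinity is attained by the lacunary series sum_j T^-(3^j): its partial sums approximate
  it better than any fixed power of their denominators.
\<close>

section \<open>Polynomials in T as Laurent series\<close>

lemma polyT_pCons: "polyT (pCons a p) = fls_const a + fls_X_inv * polyT p"
  unfolding polyT_def by (simp add: map_poly_pCons)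

lemma fls_nth_polyT: "fls_nth (polyT p) j = (if j \<le> 0 then coeff p (nat (- j)) else 0)"
proof (induction p arbitrary: j)
  case (pCons a p)
  have "fls_nth (polyT (pCons a p)) j = (if j = 0 then a else 0) + fls_nth (polyT p) (j + 1)"
    by (simp add: polyT_pCons fls_X_inv_times_conv_shift)
  also have "\<dots> = (if j \<le> 0 then coeff (pCons a p) (nat (- j)) else 0)"
    using pCons.IH[of "j + 1"]
    by (cases "j = 0") (auto simp: coeff_pCons split: nat.split intro!: arg_cong[where f = "coeff p"])
  finally show ?case .
qed (simp add: polyT_def)

lemma polyT_0 [simp]: "polyT 0 = 0"
  by (simp add: polyT_def)

lemma polyT_1 [simp]: "polyT 1 = 1"
  by (simp add: polyT_def)

lemma polyT_add: "polyT (p + q) = polyT p + polyT q"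
  by (intro fls_eqI) (simp add: fls_nth_polyT)

lemma polyT_diff: "polyT (p - q) = polyT p - polyT q"
  by (intro fls_eqI) (simp add: fls_nth_polyT)

lemma polyT_smult: "polyT (smult a p) = fls_const a * polyT p"
  by (intro fls_eqI) (simp add: fls_nth_polyT)

lemma polyT_monom: "polyT (monom c n) = fls_const c * fls_X_inv ^ n"
  by (intro fls_eqI) (auto simp: fls_nth_polyT fls_X_inv_power_times_conv_shift coeff_monom)

lemma polyT_mult: "polyT (p * q) = polyT p * polyT q"
proof (induction p)
  case (pCons a p)
  have "polyT (pCons a p * q) = fls_const a * polyT q + fls_X_inv * polyT (p * q)"
    by (simp add: mult_pCons_left polyT_add polyT_smult polyT_pCons)
  also have "\<dots> = polyT (pCons a p) * polyT q"
    by (simp add: pCons.IH polyT_pCons algebra_simps)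
  finally show ?case .
qed simp

lemma polyT_power: "polyT (p ^ k) = polyT p ^ k"
  by (induction k) (simp_all add: polyT_mult)

lemma polyT_sum: "polyT (sum f A) = (\<Sum>x\<in>A. polyT (f x))"
  by (induction A rule: infinite_finite_induct) (simp_all add: polyT_add)

lemma polyT_eq_0_iff [simp]: "polyT p = 0 \<longleftrightarrow> p = 0"
proof
  assume "polyT p = 0"
  then have "coeff p i = 0" for i
    using fls_nth_polyT[of p "- int i"] by simp
  then show "p = 0"
    by (intro poly_eqI) simp
qed simp

lemma fls_subdegree_polyT: "p \<noteq> 0 \<Longrightarrow> fls_subdegree (polyT p) = - int (degree p)"
  by (intro fls_subdegree_eqI) (auto simp: fls_nth_polyT coeff_eq_0)

lemma exists_polyT_polynomial_part: "\<exists>p. \<forall>j\<le>0. fls_nth (h - polyT p) j = 0"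
proof
  define p where "p = (\<Sum>i\<le>nat (- fls_subdegree h). monom (fls_nth h (- int i)) i)"
  show "\<forall>j\<le>0. fls_nth (h - polyT p) j = 0"
  proof (intro allI impI)
    fix j :: int
    assume "j \<le> 0"
    then have "coeff p (nat (- j)) = fls_nth h j"
      by (auto simp: p_def coeff_sum)
    with \<open>j \<le> 0\<close> show "fls_nth (h - polyT p) j = 0"
      by (simp add: fls_nth_polyT)
  qed
qed

lemma in_range_polyT_iff: "h \<in> range polyT \<longleftrightarrow> (\<forall>j>0. fls_nth h j = 0)"
proof
  assume "\<forall>j>0. fls_nth h j = 0"
  moreover obtain p where "\<forall>j\<le>0. fls_nth (h - polyT p) j = 0"
    using exists_polyT_polynomial_part by blast
  ultimately have "h = polyT p"
    by (intro fls_eqI) (metis fls_nth_polyT diff_eq_eq fls_minus_nth linorder_not_le add_0)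
  then show "h \<in> range polyT"
    by simp
qed (auto simp: fls_nth_polyT)

section \<open>Approximations and Lagrange constants\<close>

lemma ratfunT_divide: "q \<noteq> 0 \<Longrightarrow> polyT p / polyT q \<in> ratfunT"
  unfolding ratfunT_def by blast

lemma liouville_subdegree_le:
  assumes "q0 \<noteq> 0" "q \<noteq> 0" "polyT p0 / polyT q0 \<noteq> polyT p / polyT q"
  shows "fls_subdegree (polyT p0 / polyT q0 - polyT p / polyT q) \<le> int (degree q0) + int (degree q)"
proof -
  have eq: "polyT p0 / polyT q0 - polyT p / polyT q = polyT (p0 * q - p * q0) / polyT (q0 * q)"
    using assms by (simp add: polyT_mult polyT_diff field_simps)
  with assms have "p0 * q - p * q0 \<noteq> 0"
    by auto
  with assms show ?thesis
    unfolding eq by (simp add: fls_divide_subdegree fls_subdegree_polyT degree_mult_eq)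
qed

lemma infinite_if_subdegree_unbounded:
  fixes S :: "'a::ab_group_add fls set"
  assumes "\<And>M. \<exists>r\<in>S. \<alpha> \<noteq> r \<and> M \<le> fls_subdegree (\<alpha> - r)"
  shows "infinite S"
proof
  assume "finite S"
  obtain r where r: "r \<in> S" "Max ((\<lambda>r. fls_subdegree (\<alpha> - r)) ` S) + 1 \<le> fls_subdegree (\<alpha> - r)"
    using assms by blast
  moreover have "fls_subdegree (\<alpha> - r) \<le> Max ((\<lambda>r. fls_subdegree (\<alpha> - r)) ` S)"
    using \<open>finite S\<close> r(1) by (intro Max_ge) auto
  ultimately show False
    by simp
qed

lemma good_approxI:
  assumes "q \<noteq> 0" "\<alpha> \<noteq> polyT p / polyT q"
    and "2 * int (degree q) + k \<le> fls_subdegree (\<alpha> - polyT p / polyT q)"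
  shows "polyT p / polyT q \<in> good_approx \<alpha> k"
  unfolding good_approx_def degT_le_def using assms by force

lemma good_approx_antimono: "k' \<le> k \<Longrightarrow> good_approx \<alpha> k \<subseteq> good_approx \<alpha> k'"
  unfolding good_approx_def degT_le_def by fastforce

lemma lagrange_const_eqI:
  assumes "infinite (good_approx \<alpha> n)" "finite (good_approx \<alpha> (n + 1))"
  shows "lagrange_const \<alpha> = ereal (of_int n)"
  unfolding lagrange_const_def
proof (rule antisym)
  have "k \<le> n" if "infinite (good_approx \<alpha> k)" for k
  proof (rule ccontr)
    assume "\<not> k \<le> n"
    then have "good_approx \<alpha> k \<subseteq> good_approx \<alpha> (n + 1)"
      by (intro good_approx_antimono) simp
    with that assms(2) show False
      using finite_subset by blast
  qed
  then show "Sup {ereal (of_int k) |k. infinite (good_approx \<alpha> k)} \<le> ereal (of_int n)"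
    by (intro Sup_least) auto
  show "ereal (of_int n) \<le> Sup {ereal (of_int k) |k. infinite (good_approx \<alpha> k)}"
    using assms(1) by (intro Sup_upper) blast
qed

lemma lagrange_const_eq_infinity:
  assumes "\<And>k. infinite (good_approx \<alpha> k)"
  shows "lagrange_const \<alpha> = \<infinity>"
  unfolding lagrange_const_def
proof (rule ereal_top)
  fix B :: real
  have "ereal B \<le> ereal (of_int \<lceil>B\<rceil>)"
    by simp
  also have "\<dots> \<le> Sup {ereal (of_int k) |k. infinite (good_approx \<alpha> k)}"
    using assms by (intro Sup_upper) blast
  finally show "ereal B \<le> Sup {ereal (of_int k) |k. infinite (good_approx \<alpha> k)}" .
qed

lemma int_exists_last_before:
  fixes a b :: int
  assumes "P a" "\<not> P b" "a \<le> b"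
  obtains n where "a \<le> n" "P n" "\<not> P (n + 1)"
proof -
  have "P k" if "a \<le> k" "\<forall>n\<ge>a. P n \<longrightarrow> P (n + 1)" for k
    using that(1) by (induction k rule: int_ge_induct) (use assms(1) that(2) in auto)
  with assms that show ?thesis
    by blast
qed

lemma lagrange_const_cases:
  assumes "infinite (good_approx \<alpha> 1)"
  obtains n where "n \<ge> 1" "lagrange_const \<alpha> = ereal (of_int n)" | "lagrange_const \<alpha> = \<infinity>"
proof (cases "\<forall>k. infinite (good_approx \<alpha> k)")
  case True
  with that(2) show ?thesis
    by (simp add: lagrange_const_eq_infinity)
next
  case False
  then obtain k where "finite (good_approx \<alpha> k)"
    by blast
  then have "finite (good_approx \<alpha> (max 1 k))"
    using good_approx_antimono[of k "max 1 k" \<alpha>] finite_subset by auto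
  with assms obtain n where n: "1 \<le> n" "infinite (good_approx \<alpha> n)" "finite (good_approx \<alpha> (n + 1))"
    using int_exists_last_before[of "\<lambda>k. infinite (good_approx \<alpha> k)" 1 "max 1 k"] by auto
  show ?thesis
    by (rule that(1)[OF n(1) lagrange_const_eqI[OF n(2,3)]])
qed

section \<open>Dirichlet's theorem\<close>

lemma homogeneous_linear_system_nontrivial_solution:
  fixes a :: "'b \<Rightarrow> nat \<Rightarrow> 'a::field"
  assumes "finite J" "card J < n"
  shows "\<exists>v. (\<exists>i<n. v i \<noteq> 0) \<and> (\<forall>j\<in>J. (\<Sum>i<n. a j i * v i) = 0)"
  using assms
proof (induction n arbitrary: J a)
  case (Suc n)
  show ?case
  proof (cases "\<forall>j\<in>J. a j n = 0")
    case True
    then show ?thesis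
      by (intro exI[of _ "\<lambda>i. if i = n then 1 else 0"]) auto
  next
    case False
    then obtain j0 where j0: "j0 \<in> J" "a j0 n \<noteq> 0"
      by blast
    \<comment> \<open>Gaussian elimination: use equation j0 to eliminate the last unknown from the others.\<close>
    define b where "b j i = a j i - a j n / a j0 n * a j0 i" for j i
    have "card J > 0"
      using Suc.prems(1) j0(1) card_gt_0_iff by blast
    with Suc.prems j0(1) have "card (J - {j0}) < n"
      by simp
    then obtain w where w: "\<exists>i<n. w i \<noteq> 0" "\<And>j. j \<in> J - {j0} \<Longrightarrow> (\<Sum>i<n. b j i * w i) = 0"
      using Suc.IH[of "J - {j0}" b] Suc.prems(1) by auto
    define v where "v i = (if i = n then - (\<Sum>i<n. a j0 i * w i) / a j0 n else w i)" for i
    have sum_v: "(\<Sum>i<Suc n. a j i * v i) = (\<Sum>i<n. a j i * w i) + a j n * v n" for j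
      by (simp add: v_def)
    have "(\<Sum>i<Suc n. a j i * v i) = 0" if "j \<in> J" for j
    proof (cases "j = j0")
      case False
      have "(\<Sum>i<n. b j i * w i) = (\<Sum>i<n. a j i * w i) - a j n / a j0 n * (\<Sum>i<n. a j0 i * w i)"
        by (simp add: b_def algebra_simps sum_subtractf sum_distrib_left)
      with w(2)[of j] False that
      have "(\<Sum>i<n. a j i * w i) = a j n / a j0 n * (\<Sum>i<n. a j0 i * w i)"
        by simp
      then show ?thesis
        unfolding sum_v v_def by simp
    next
      case True
      with j0(2) show ?thesis
        unfolding sum_v v_def by simp
    qed
    moreover have "\<exists>i<Suc n. v i \<noteq> 0"
      using w(1) by (auto simp: v_def)
    ultimately show ?thesis
      by blast
  qed
qed simp

lemma dirichlet_denominator_exists: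
  "\<exists>q. q \<noteq> 0 \<and> degree q \<le> N \<and> (\<forall>j. 0 < j \<and> j \<le> int N \<longrightarrow> fls_nth (polyT q * \<alpha>) j = 0)"
proof -
  obtain v where v: "\<exists>i<Suc N. v i \<noteq> 0"
    and v_sol: "\<forall>j\<in>{1..N}. (\<Sum>i<Suc N. fls_nth \<alpha> (int j + int i) * v i) = 0"
    using homogeneous_linear_system_nontrivial_solution[of "{1..N}" "Suc N"
        "\<lambda>j i. fls_nth \<alpha> (int j + int i)"] by auto
  define q where "q = (\<Sum>i<Suc N. monom (v i) i)"
  have coeff_q: "coeff q i = (if i < Suc N then v i else 0)" for i
    by (simp add: q_def coeff_sum)
  have "polyT q * \<alpha> = (\<Sum>i<Suc N. fls_const (v i) * (fls_X_inv ^ i * \<alpha>))"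
    by (simp add: q_def polyT_sum polyT_monom sum_distrib_right mult.assoc del: sum.lessThan_Suc)
  then have nth_eq: "fls_nth (polyT q * \<alpha>) j = (\<Sum>i<Suc N. fls_nth \<alpha> (j + int i) * v i)" for j
    by (simp add: fls_nth_sum fls_X_inv_power_times_conv_shift mult.commute del: sum.lessThan_Suc)
  have "fls_nth (polyT q * \<alpha>) j = 0" if "0 < j" "j \<le> int N" for j
  proof -
    from that have "nat j \<in> {1..N}"
      by auto
    from bspec[OF v_sol this] that show ?thesis
      by (simp add: nth_eq del: sum.lessThan_Suc)
  qed
  moreover have "q \<noteq> 0"
    using v coeff_q by (metis coeff_0)
  moreover have "degree q \<le> N"
    using coeff_q by (intro degree_le) auto
  ultimately show ?thesis
    by blast
qed

lemma dirichlet_infinite_good_approx: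
  assumes "\<alpha> \<notin> ratfunT"
  shows "infinite (good_approx \<alpha> 1)"
proof (rule infinite_if_subdegree_unbounded)
  fix M :: int
  define N where "N = nat M"
  obtain q where q: "q \<noteq> 0" "degree q \<le> N"
    and small: "\<And>j. 0 < j \<Longrightarrow> j \<le> int N \<Longrightarrow> fls_nth (polyT q * \<alpha>) j = 0"
    using dirichlet_denominator_exists[of N \<alpha>] by blast
  obtain p where p: "\<And>j. j \<le> 0 \<Longrightarrow> fls_nth (polyT q * \<alpha> - polyT p) j = 0"
    using exists_polyT_polynomial_part by blast
  define R where "R = polyT q * \<alpha> - polyT p"
  \<comment> \<open>the fractional part of q \<alpha>, which starts at T^-(N+1) by the choice of q\<close>
  have diff: "\<alpha> - polyT p / polyT q = R / polyT q"
    using q(1) by (simp add: R_def field_simps)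
  have "R \<noteq> 0"
    using assms q(1) ratfunT_divide[of q p] diff by auto
  then have ne: "\<alpha> \<noteq> polyT p / polyT q"
    using q(1) diff by auto
  have "fls_nth R j = 0" if "j < int N + 1" for j
    using p small that unfolding R_def by (cases "j \<le> 0") (auto simp: fls_nth_polyT)
  with \<open>R \<noteq> 0\<close> have "int N + 1 \<le> fls_subdegree R"
    by (intro fls_subdegree_geI)
  moreover have "fls_subdegree (\<alpha> - polyT p / polyT q) = fls_subdegree R + int (degree q)"
    using \<open>R \<noteq> 0\<close> q(1) by (simp add: diff fls_divide_subdegree fls_subdegree_polyT)
  ultimately have bound: "int N + 1 + int (degree q) \<le> fls_subdegree (\<alpha> - polyT p / polyT q)"
    by simp
  with q ne have "polyT p / polyT q \<in> good_approx \<alpha> 1"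
    by (intro good_approxI) auto
  moreover from bound have "M \<le> fls_subdegree (\<alpha> - polyT p / polyT q)"
    unfolding N_def by linarith
  ultimately show "\<exists>r\<in>good_approx \<alpha> 1. \<alpha> \<noteq> r \<and> M \<le> fls_subdegree (\<alpha> - r)"
    using ne by blast
qed

section \<open>Quadratic series with Lagrange constant m\<close>

text \<open>
  quad_root m and quad_conj m are the roots (T^m +- sqrt (T^(2m) + 4)) / 2 of x^2 - T^m x - 1, with
  quad_sqrt m = sqrt (1 + 4 T^-(2m)); the radical with parameter (\<lambda>_ _. 1) is the square root with
  constant term 1.
\<close>

definition quad_sqrt :: "nat \<Rightarrow> rat fls" where
  "quad_sqrt m = fps_to_fls (fps_radical (\<lambda>_ _. 1) 2 (1 + 4 * fps_X ^ (2 * m)))"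

definition quad_root :: "nat \<Rightarrow> rat fls" where
  "quad_root m = fls_X_inv ^ m * (1 + quad_sqrt m) / 2"

definition quad_conj :: "nat \<Rightarrow> rat fls" where
  "quad_conj m = fls_X_inv ^ m - quad_root m"

lemma quad_sqrt_square:
  assumes "m \<ge> 1"
  shows "quad_sqrt m ^ 2 = 1 + 4 * fls_X ^ (2 * m)"
proof -
  let ?a = "1 + 4 * fps_X ^ (2 * m) :: rat fps"
  have "?a $ 0 = 1"
    using assms by simp
  then have "fps_radical (\<lambda>_ _. 1) (Suc 1) ?a ^ Suc 1 = ?a"
    using power_radical[of ?a "\<lambda>_ _. 1" 1] by simp
  then have "fps_to_fls (fps_radical (\<lambda>_ _. 1) 2 ?a ^ 2) = fps_to_fls ?a"
    by (simp add: numeral_2_eq_2)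
  then show ?thesis
    by (simp add: quad_sqrt_def fps_to_fls_power fls_times_fps_to_fls)
qed

lemma fls_nth_quad_sqrt_0: "fls_nth (quad_sqrt m) 0 = 1"
  by (simp add: quad_sqrt_def)

lemma fls_subdegree_quad_sqrt: "fls_subdegree (quad_sqrt m) = 0"
  by (rule fls_subdegree_eqI) (auto simp: quad_sqrt_def)

lemma quad_sqrt_nonzero: "quad_sqrt m \<noteq> 0"
  using fls_nth_quad_sqrt_0[of m] by auto

lemma quad_root_mult_conj:
  assumes "m \<ge> 1"
  shows "quad_root m * quad_conj m = -1"
proof -
  have "quad_root m * quad_conj m = - ((fls_X_inv ^ m) ^ 2 * (quad_sqrt m ^ 2 - 1) / 4)"
    by (simp add: quad_conj_def quad_root_def field_simps power2_eq_square)
  also have "\<dots> = - ((fls_X_inv ^ m * fls_X ^ m) ^ 2)"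
    using assms by (simp add: quad_sqrt_square power_mult_distrib mult.commute flip: power_mult)
  also have "\<dots> = -1"
    by (simp add: fls_X_inv_power_times_conv_shift fls_X_power_conv_shift_1)
  finally show ?thesis .
qed

lemma fls_subdegree_quad_conj_diff:
  "fls_subdegree (quad_conj m - quad_root m) = - int m"
proof -
  have "quad_conj m - quad_root m = - (fls_X_inv ^ m * quad_sqrt m)"
    by (simp add: quad_conj_def quad_root_def field_simps)
  then show ?thesis
    by (simp add: quad_sqrt_nonzero fls_subdegree_quad_sqrt)
qed

lemma fls_subdegree_quad_root: "fls_subdegree (quad_root m) = - int m"
proof -
  have "fls_nth (1 + quad_sqrt m) 0 \<noteq> 0"
    by (simp add: fls_nth_quad_sqrt_0)
  then have "1 + quad_sqrt m \<noteq> 0"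
    by (metis fls_nonzeroI)
  moreover have "fls_subdegree (1 + quad_sqrt m) = 0"
    by (rule fls_subdegree_eqI) (auto simp: quad_sqrt_def)
  ultimately show ?thesis
    unfolding quad_root_def by (simp add: fls_divide_subdegree)
qed

lemma fls_subdegree_quad_conj:
  assumes "m \<ge> 1"
  shows "fls_subdegree (quad_conj m) = int m"
proof -
  have "quad_root m \<noteq> 0" "quad_conj m \<noteq> 0"
    using quad_root_mult_conj[OF assms] by auto
  then have "fls_subdegree (quad_root m) + fls_subdegree (quad_conj m) = 0"
    using quad_root_mult_conj[OF assms] fls_subdegree_mult[of "quad_root m" "quad_conj m"] by simp
  then show ?thesis
    by (simp add: fls_subdegree_quad_root)
qed

definition quad_norm :: "nat \<Rightarrow> rat poly \<Rightarrow> rat poly \<Rightarrow> rat poly" where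
  "quad_norm m p q = p ^ 2 - monom 1 m * p * q - q ^ 2"

lemma polyT_quad_norm:
  assumes "m \<ge> 1" "q \<noteq> 0"
  shows "polyT q ^ 2 * (quad_root m - polyT p / polyT q) * (quad_conj m - polyT p / polyT q)
    = polyT (quad_norm m p q)"
proof -
  define P Q \<alpha> \<beta> where "P = polyT p" and "Q = polyT q" and "\<alpha> = quad_root m" and "\<beta> = quad_conj m"
  have "Q \<noteq> 0" "\<alpha> * \<beta> = -1" "\<alpha> + \<beta> = fls_X_inv ^ m"
    using assms quad_root_mult_conj[of m] by (simp_all add: Q_def \<alpha>_def \<beta>_def quad_conj_def)
  then have "Q ^ 2 * (\<alpha> - P / Q) * (\<beta> - P / Q) = (Q * \<alpha> - P) * (Q * \<beta> - P)"
    by (simp add: field_simps power2_eq_square)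
  also have "\<dots> = Q ^ 2 * (\<alpha> * \<beta>) - P * Q * (\<alpha> + \<beta>) + P ^ 2"
    by (simp add: algebra_simps power2_eq_square)
  also have "\<dots> = P ^ 2 - fls_X_inv ^ m * P * Q - Q ^ 2"
    using \<open>\<alpha> * \<beta> = -1\<close> \<open>\<alpha> + \<beta> = fls_X_inv ^ m\<close> by (simp add: algebra_simps)
  finally have "Q ^ 2 * (\<alpha> - P / Q) * (\<beta> - P / Q) = P ^ 2 - fls_X_inv ^ m * P * Q - Q ^ 2" .
  then show ?thesis
    by (simp add: P_def Q_def \<alpha>_def \<beta>_def quad_norm_def polyT_diff polyT_mult polyT_power polyT_monom)
qed

lemma quad_root_approx_subdegree:
  assumes "m \<ge> 1" "q \<noteq> 0" "quad_root m \<noteq> polyT p / polyT q"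
    and "fls_subdegree (quad_conj m - polyT p / polyT q) = - int m"
  shows "fls_subdegree (quad_root m - polyT p / polyT q)
    = 2 * int (degree q) + int m - int (degree (quad_norm m p q))"
proof -
  note norm = polyT_quad_norm[OF assms(1,2), of p]
  have "quad_conj m - polyT p / polyT q \<noteq> 0"
    using assms(1,4) by auto
  moreover from this assms(2,3) norm have "quad_norm m p q \<noteq> 0"
    by auto
  ultimately show ?thesis
    using assms arg_cong[OF norm, of fls_subdegree] by (simp add: fls_subdegree_polyT fls_subdegree_pow)
qed

text \<open>
  The convergents of quad_root m = [T^m; T^m, T^m, ...] are continuant m (k + 1) / continuant m k.
\<close>

fun continuant :: "nat \<Rightarrow> nat \<Rightarrow> rat poly" where
  "continuant m 0 = 1"
| "continuant m (Suc 0) = monom 1 m"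
| "continuant m (Suc (Suc k)) = monom 1 m * continuant m (Suc k) + continuant m k"

lemma continuant_degree:
  assumes "m \<ge> 1"
  shows "continuant m k \<noteq> 0 \<and> degree (continuant m k) = k * m"
  using assms
proof (induction m k rule: continuant.induct)
  case (3 m k)
  then have "degree (continuant m k) < degree (monom 1 m * continuant m (Suc k))"
    by (simp add: degree_mult_eq degree_monom_eq)
  then have "degree (continuant m (Suc (Suc k))) = m + Suc k * m"
    using 3 by (simp add: degree_add_eq_left degree_mult_eq degree_monom_eq)
  with 3 show ?case
    by (auto simp del: continuant.simps)
qed (simp_all add: degree_monom_eq)

lemma quad_norm_continuant:
  "quad_norm m (continuant m (Suc k)) (continuant m k) = (-1) ^ Suc k"
proof (induction k)
  case 0
  then show ?case
    by (simp add: quad_norm_def power2_eq_square)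
next
  case (Suc k)
  have "quad_norm m (x * p + q) p = - quad_norm m p q" if "x = monom 1 m" for x p q
    unfolding quad_norm_def that[symmetric] by algebra
  with Suc show ?case
    by simp
qed

lemma quad_root_convergent:
  fixes m k :: nat
  assumes "m \<ge> 1"
  defines "p \<equiv> continuant m (Suc k)" and "q \<equiv> continuant m k"
  shows "quad_root m \<noteq> polyT p / polyT q"
    and "fls_subdegree (quad_root m - polyT p / polyT q) = 2 * int (degree q) + int m"
proof -
  have pq: "p \<noteq> 0" "q \<noteq> 0" "degree p = degree q + m"
    using continuant_degree[OF assms(1), of k] continuant_degree[OF assms(1), of "Suc k"]
    by (simp_all add: p_def q_def)
  then have "fls_subdegree (polyT p / polyT q) = - int m"
    by (simp add: fls_divide_subdegree fls_subdegree_polyT)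
  with pq assms(1) have conj_diff: "fls_subdegree (quad_conj m - polyT p / polyT q) = - int m"
    by (subst fls_subdegree_diff_eq2) (simp_all add: fls_subdegree_quad_conj)
  have norm: "quad_norm m p q = (-1) ^ Suc k"
    unfolding p_def q_def by (rule quad_norm_continuant)
  show ne: "quad_root m \<noteq> polyT p / polyT q"
    using polyT_quad_norm[OF assms(1) pq(2), of p] norm by auto
  show "fls_subdegree (quad_root m - polyT p / polyT q) = 2 * int (degree q) + int m"
    using quad_root_approx_subdegree[OF assms(1) pq(2) ne conj_diff] norm
    by (simp add: degree_power_eq)
qed

lemma quad_root_not_ratfun:
  assumes "m \<ge> 1"
  shows "quad_root m \<notin> ratfunT"
proof
  assume "quad_root m \<in> ratfunT"
  then obtain p0 q0 where pq0: "q0 \<noteq> 0" "quad_root m = polyT p0 / polyT q0"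
    unfolding ratfunT_def by blast
  define k where "k = Suc (degree q0)"
  define p q where "p = continuant m (Suc k)" and "q = continuant m k"
  have "q \<noteq> 0" "degree q = k * m"
    using continuant_degree[OF assms] by (simp_all add: q_def)
  have "2 * int (degree q) + int m \<le> int (degree q0) + int (degree q)"
    using quad_root_convergent[OF assms, of k, folded p_def q_def] pq0 \<open>q \<noteq> 0\<close>
      liouville_subdegree_le[of q0 q p0 p] by simp
  moreover have "k \<le> k * m"
    using assms by simp
  ultimately show False
    using \<open>degree q = k * m\<close> unfolding k_def by linarith
qed

lemma infinite_good_approx_quad_root:
  assumes "m \<ge> 1"
  shows "infinite (good_approx (quad_root m) (int m))"
proof (rule infinite_if_subdegree_unbounded)
  fix M :: int
  define p q where "p = continuant m (Suc (nat M))" and "q = continuant m (nat M)"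
  note conv = quad_root_convergent[OF assms, of "nat M", folded p_def q_def]
  have "q \<noteq> 0" "degree q = nat M * m"
    using continuant_degree[OF assms] by (simp_all add: q_def)
  then have "polyT p / polyT q \<in> good_approx (quad_root m) (int m)"
    using conv by (intro good_approxI) simp_all
  moreover have "M \<le> fls_subdegree (quad_root m - polyT p / polyT q)"
  proof -
    have "nat M \<le> nat M * m"
      using assms by simp
    with conv(2) \<open>degree q = nat M * m\<close> show ?thesis
      by linarith
  qed
  ultimately show "\<exists>r\<in>good_approx (quad_root m) (int m). quad_root m \<noteq> r \<and> M \<le> fls_subdegree (quad_root m - r)"
    using conv(1) by blast
qed

lemma good_approx_quad_root_empty:
  assumes "m \<ge> 1"
  shows "good_approx (quad_root m) (int m + 1) = {}"
proof (rule ccontr)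
  assume "good_approx (quad_root m) (int m + 1) \<noteq> {}"
  then obtain p q where q: "q \<noteq> 0"
    and deg: "degT_le (quad_root m - polyT p / polyT q) (- 2 * int (degree q) - (int m + 1))"
    unfolding good_approx_def by blast
  define r where "r = polyT p / polyT q"
  have ne: "quad_root m \<noteq> r"
    using quad_root_not_ratfun[OF assms] ratfunT_divide[OF q] by (auto simp: r_def)
  then have close: "2 * int (degree q) + int m + 1 \<le> fls_subdegree (quad_root m - r)"
    using deg by (simp add: degT_le_def r_def)
  have "quad_conj m - r = (quad_conj m - quad_root m) + (quad_root m - r)"
    by simp
  also have "fls_subdegree \<dots> = - int m"
    using close fls_subdegree_quad_conj_diff[of m] assms
    by (subst fls_subdegree_add_eq1) auto
  finally have "fls_subdegree (quad_root m - r) = 2 * int (degree q) + int m - int (degree (quad_norm m p q))"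
    using quad_root_approx_subdegree[OF assms q] ne by (simp add: r_def)
  with close show False
    by simp
qed

lemma lagrange_const_quad_root:
  assumes "m \<ge> 1"
  shows "lagrange_const (quad_root m) = ereal (of_int (int m))"
  using infinite_good_approx_quad_root[OF assms] good_approx_quad_root_empty[OF assms]
  by (intro lagrange_const_eqI) simp_all

section \<open>A lacunary series with Lagrange constant infinity\<close>

text \<open>
  Its partial sum lacunary_part M has denominator T^(3^M) and error of
  degree -3^(M+1) = -2 * 3^M - 3^M; the ratio 3 > 2 between consecutive exponents is what makes
  the order of approximation unbounded.
\<close>

definition lacunary :: "rat fls" where
  "lacunary = fps_to_fls (Abs_fps (\<lambda>i. if \<exists>j. i = 3 ^ j then 1 else 0))"

definition lacunary_part :: "nat \<Rightarrow> rat fls" where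
  "lacunary_part M = fps_to_fls (Abs_fps (\<lambda>i. if (\<exists>j. i = 3 ^ j) \<and> i \<le> 3 ^ M then 1 else 0))"

lemma fls_subdegree_lacunary_diff: "fls_subdegree (lacunary - lacunary_part M) = int (3 ^ Suc M)"
proof (rule fls_subdegree_eqI)
  show "fls_nth (lacunary - lacunary_part M) (int (3 ^ Suc M)) \<noteq> 0"
    by (auto simp: lacunary_def lacunary_part_def simp del: of_nat_power power_Suc)
next
  fix n :: int
  assume n: "n < int (3 ^ Suc M)"
  have no_power_between: "\<not> (3 ^ M < (3::nat) ^ j \<and> (3::nat) ^ j < 3 ^ Suc M)" for j
    using power_less_imp_less_exp[of "3::nat" M j] power_less_imp_less_exp[of "3::nat" j "Suc M"]
    by auto
  show "fls_nth (lacunary - lacunary_part M) n = 0"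
  proof (cases "n < 0")
    case False
    with n have "nat n < 3 ^ Suc M"
      by linarith
    with no_power_between show ?thesis
      by (auto simp: lacunary_def lacunary_part_def simp del: power_Suc)
  qed (simp add: lacunary_def lacunary_part_def)
qed

lemma lacunary_neq_part: "lacunary \<noteq> lacunary_part M"
  using fls_subdegree_lacunary_diff[of M] by auto

lemma lacunary_part_ratfun: "\<exists>p. lacunary_part M = polyT p / polyT (monom 1 (3 ^ M))"
proof -
  have "fls_X_inv ^ 3 ^ M * lacunary_part M \<in> range polyT"
    unfolding in_range_polyT_iff by (simp add: fls_X_inv_power_times_conv_shift lacunary_part_def)
  then obtain p where "polyT p = fls_X_inv ^ 3 ^ M * lacunary_part M"
    by (metis rangeE)
  moreover have "polyT (monom 1 (3 ^ M)) = fls_X_inv ^ 3 ^ M"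
    by (simp add: polyT_monom)
  ultimately have "polyT p / polyT (monom 1 (3 ^ M)) = fls_X_inv ^ 3 ^ M * lacunary_part M / fls_X_inv ^ 3 ^ M"
    by (simp only:)
  also have "\<dots> = lacunary_part M"
    by (rule nonzero_mult_div_cancel_left) simp
  finally have "lacunary_part M = polyT p / polyT (monom 1 (3 ^ M))"
    by (rule sym)
  then show ?thesis ..
qed

lemma int_less_power_3: "int n < 3 ^ n"
proof -
  have "(2::nat) ^ n \<le> 3 ^ n"
    by (rule power_mono) simp_all
  with less_exp[of n] have "n < (3::nat) ^ n"
    by (rule less_le_trans)
  then show ?thesis
    by (metis of_nat_less_iff of_nat_numeral of_nat_power)
qed

lemma lacunary_not_ratfun: "lacunary \<notin> ratfunT"
proof
  assume "lacunary \<in> ratfunT"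
  then obtain p0 q0 where pq0: "q0 \<noteq> 0" "lacunary = polyT p0 / polyT q0"
    unfolding ratfunT_def by blast
  define M where "M = degree q0"
  obtain p where p: "lacunary_part M = polyT p / polyT (monom 1 (3 ^ M))"
    using lacunary_part_ratfun by blast
  have "fls_subdegree (lacunary - lacunary_part M) \<le> int (degree q0) + int (degree (monom (1::rat) (3 ^ M)))"
    using liouville_subdegree_le[OF pq0(1), of "monom 1 (3 ^ M)" p0 p] lacunary_neq_part[of M]
    by (simp add: p pq0(2))
  then have "(3::int) ^ Suc M \<le> int M + 3 ^ M"
    by (simp add: fls_subdegree_lacunary_diff degree_monom_eq M_def)
  moreover have "(0::int) < 3 ^ M"
    by simp
  ultimately show False
    using int_less_power_3[of M] by simp
qed

lemma infinite_good_approx_lacunary: "infinite (good_approx lacunary k)"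
proof (rule infinite_if_subdegree_unbounded)
  fix B :: int
  define M where "M = nat (max k B)"
  obtain p where p: "lacunary_part M = polyT p / polyT (monom 1 (3 ^ M))"
    using lacunary_part_ratfun by blast
  have "max k B \<le> int M"
    unfolding M_def by linarith
  with int_less_power_3[of M] have "max k B \<le> 3 ^ M"
    by linarith
  then have close: "2 * 3 ^ M + max k B \<le> fls_subdegree (lacunary - lacunary_part M)"
    by (simp add: fls_subdegree_lacunary_diff)
  then have "polyT p / polyT (monom 1 (3 ^ M)) \<in> good_approx lacunary k"
    using lacunary_neq_part[of M] by (intro good_approxI) (simp_all add: degree_monom_eq flip: p)
  moreover have "B \<le> fls_subdegree (lacunary - lacunary_part M)"
    using close zero_le_power[of "3::int" M] by linarith
  ultimately show "\<exists>r\<in>good_approx lacunary k. lacunary \<noteq> r \<and> B \<le> fls_subdegree (lacunary - r)"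
    using lacunary_neq_part[of M] unfolding p by blast
qed

lemma lagrange_const_lacunary: "lagrange_const lacunary = \<infinity>"
  using infinite_good_approx_lacunary by (rule lagrange_const_eq_infinity)

theorem corollary1:
  shows "lagrange_spectrum = {ereal (of_int n) | n::int. n \<ge> 1} \<union> {\<infinity>}"
proof (intro equalityI subsetI)
  fix x
  assume "x \<in> lagrange_spectrum"
  then obtain \<alpha> where "x = lagrange_const \<alpha>" "\<alpha> \<notin> ratfunT"
    unfolding lagrange_spectrum_def by blast
  then show "x \<in> {ereal (of_int n) | n::int. n \<ge> 1} \<union> {\<infinity>}"
    by (cases rule: lagrange_const_cases[OF dirichlet_infinite_good_approx]) auto
next
  fix x
  assume "x \<in> {ereal (of_int n) | n::int. n \<ge> 1} \<union> {\<infinity>}"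
  then consider n :: int where "n \<ge> 1" "x = ereal (of_int n)" | "x = \<infinity>"
    by blast
  then show "x \<in> lagrange_spectrum"
  proof cases
    case 1
    then have "x = lagrange_const (quad_root (nat n))" "quad_root (nat n) \<notin> ratfunT"
      using lagrange_const_quad_root[of "nat n"] quad_root_not_ratfun[of "nat n"] by simp_all
    then show ?thesis
      unfolding lagrange_spectrum_def by blast
  next
    case 2
    then show ?thesis
      unfolding lagrange_spectrum_def using lagrange_const_lacunary lacunary_not_ratfun by force
  qed
qed

end
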